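(* Let $m\ge 2$ and let $X(0),X(1),\dots$ be i.i.d. random vectors in $\mathbb{R}^m$ whose components satisfy $X_{\min,i}\le X_i(k)\le X_{\max,i}$ almost surely, where $X_{\max,i}<\infty$ and $X_{\min,i}>-1$, and where at least one component is riskless, i.e. equal to a constant $r\ge 0$ almost surely. Fix an integer $n\ge 1$, let $\mathcal{X}_{n,i}:=\prod_{k=0}^{n-1}(1+X_i(k))-1$, $\mathcal{X}_n=(\mathcal{X}_{n,1},\dots,\mathcal{X}_{n,m})^T$, $\mathcal{K}:=\{K\in\mathbb{R}^m: K_i\ge 0,\ \sum_i K_i=1\}$ and $g_n(K):=\frac{1}{n}\mathbb{E}[\log(1+K^T\mathcal{X}_n)]$. Let $j\in\{1,\dots,m\}$ and let $e_j$ be the $j$th standard unit vector. Then $e_j$ is a maximizer of $g_n$ over $\mathcal{K}$ if and only if $$\mathbb{E}\left[\frac{1+X_i(0)}{1+X_j(0)}\right]\le 1\quad\text{for every } i\neq j.$$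
   Context: $X_i(k)$ is the return of asset $i$ at step $k$; components may be arbitrarily correlated. $n$ is the number of steps between rebalancings. A maximizer of $g_n$ over $\mathcal{K}$ is called a Kelly optimal feedback gain. *)

theory Defs
  imports "HOL-Probability.Probability"
begin

definition compound_return :: "(nat \<Rightarrow> 'a \<Rightarrow> real^'m) \<Rightarrow> nat \<Rightarrow> 'a \<Rightarrow> real^'m" where
  "compound_return X n \<omega> = (\<chi> i. (\<Prod>k<n. 1 + X k \<omega> $ i) - 1)"

definition gain_simplex :: "(real^'m) set" where
  "gain_simplex = {K. (\<forall>i. K $ i \<ge> 0) \<and> (\<Sum>i\<in>UNIV. K $ i) = 1}"

definition growth_rate :: "'a measure \<Rightarrow> (nat \<Rightarrow> 'a \<Rightarrow> real^'m) \<Rightarrow> nat \<Rightarrow> real^'m \<Rightarrow> real" where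
  "growth_rate M X n K = (1 / real n) * (\<integral>\<omega>. ln (1 + K \<bullet> compound_return X n \<omega>) \<partial>M)"

end

theory Submission
  imports Defs
begin

text \<open>
  For K in the simplex, 1 + K^T calX_n = K^T W, where W_i = prod_{k<n} (1 + X_i(k)) is the gross
  return of asset i between rebalancings; almost surely W lies between two positive constants.
  If E[W_i / W_j] <= 1 for all i, integrating ln (K^T W / W_j) <= K^T W / W_j - 1 shows that e_j
  is optimal. If E[W_i / W_j] > 1, moving a small weight t from asset j to asset i multiplies the
  wealth by 1 + t (W_i / W_j - 1), and ln (1 + u) >= u - 2 u^2 shows that this gains
  t (E[W_i / W_j] - 1) - O(t^2) > 0. Independence and identical distribution give
  E[W_i / W_j] = E[(1 + X_i(0)) / (1 + X_j(0))]^n.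
\<close>

lemma ln_one_plus_ge_quadratic:
  fixes u :: real
  assumes "\<bar>u\<bar> \<le> 1/2"
  shows "u - 2 * u\<^sup>2 \<le> ln (1 + u)"
proof (cases "u \<ge> 0")
  case True
  then have "u - u\<^sup>2 \<le> ln (1 + u)"
    using assms by (intro ln_one_plus_pos_lower_bound) auto
  moreover have "0 \<le> u\<^sup>2" by simp
  ultimately show ?thesis by linarith
next
  case False
  then have "- (- u) - 2 * (- u)\<^sup>2 \<le> ln (1 - (- u))"
    using assms by (intro ln_one_minus_pos_lower_bound) auto
  then show ?thesis by simp
qed

lemma abs_ln_one_plus_le_one:
  fixes u :: real
  assumes "\<bar>u\<bar> \<le> 1/2"
  shows "\<bar>ln (1 + u)\<bar> \<le> 1"
proof -
  have "ln (1 + u) \<le> u"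
    using assms by (intro ln_add_one_self_le_self2) auto
  moreover have "2 * u\<^sup>2 \<le> 1/2"
  proof -
    have "\<bar>u\<bar>\<^sup>2 \<le> (1/2)\<^sup>2"
      using assms by (intro power_mono) auto
    then show ?thesis by (simp add: power2_eq_square)
  qed
  ultimately show ?thesis
    using ln_one_plus_ge_quadratic[OF assms] assms by linarith
qed

lemma linear_gain_beats_quadratic_loss:
  fixes C d :: real
  assumes C: "1 \<le> C" and d: "0 < d"
  obtains t where "0 < t" "t \<le> 1" "t * C \<le> 1/2" "2 * t\<^sup>2 * C\<^sup>2 < t * d"
proof -
  define t where "t = min (1 / (2 * C)) (d / (4 * C\<^sup>2))"
  have t_pos: "0 < t"
    using C d by (simp add: t_def)
  have tC: "t * C \<le> 1/2"
  proof -
    have "t * C \<le> 1 / (2 * C) * C"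
      using C by (intro mult_right_mono) (auto simp: t_def)
    then show ?thesis
      using C by simp
  qed
  have "t * C\<^sup>2 \<le> d / (4 * C\<^sup>2) * C\<^sup>2"
    by (intro mult_right_mono) (auto simp: t_def)
  then have "t * C\<^sup>2 \<le> d / 4"
    using C by simp
  then have "2 * t * (t * C\<^sup>2) \<le> 2 * t * (d / 4)"
    using t_pos by (intro mult_left_mono) auto
  then have "2 * t\<^sup>2 * C\<^sup>2 < t * d"
    using t_pos d by (simp add: power2_eq_square algebra_simps)
  moreover have "t \<le> 1"
    using tC mult_left_mono[of 1 C t] C t_pos by linarith
  ultimately show ?thesis
    using that t_pos tC by blast
qed

lemma (in prob_space) expectation_ln_one_plus_small_pos:
  fixes Z :: "'a \<Rightarrow> real"
  assumes [measurable]: "Z \<in> borel_measurable M"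
    and bounded: "AE \<omega> in M. \<bar>Z \<omega>\<bar> \<le> B"
    and pos: "0 < expectation Z"
  shows "\<exists>t>0. t \<le> 1 \<and> 0 < expectation (\<lambda>\<omega>. ln (1 + t * Z \<omega>))"
proof -
  define C where "C = \<bar>B\<bar> + 1"
  have Z_le_C: "AE \<omega> in M. \<bar>Z \<omega>\<bar> \<le> C"
    using bounded by eventually_elim (simp add: C_def)
  obtain t where t: "0 < t" "t \<le> 1" "t * C \<le> 1/2"
    and gain: "2 * t\<^sup>2 * C\<^sup>2 < t * expectation Z"
    using linear_gain_beats_quadratic_loss[of C "expectation Z"] pos by (auto simp: C_def)
  have small: "AE \<omega> in M. \<bar>t * Z \<omega>\<bar> \<le> 1/2 \<and> (t * Z \<omega>)\<^sup>2 \<le> t\<^sup>2 * C\<^sup>2"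
    using Z_le_C
  proof eventually_elim
    case (elim \<omega>)
    then have tZ: "\<bar>t * Z \<omega>\<bar> \<le> t * C"
      using t by (simp add: abs_mult mult_left_mono)
    then have "\<bar>t * Z \<omega>\<bar>\<^sup>2 \<le> (t * C)\<^sup>2"
      by (intro power_mono) auto
    then show ?case
      using tZ t by (simp add: power_mult_distrib)
  qed
  have int_Z: "integrable M Z"
    using Z_le_C by (intro integrable_const_bound[where B=C]) auto
  have int_ln: "integrable M (\<lambda>\<omega>. ln (1 + t * Z \<omega>))"
  proof (intro integrable_const_bound[where B=1])
    show "AE \<omega> in M. norm (ln (1 + t * Z \<omega>)) \<le> 1"
      using small by eventually_elim (simp add: abs_ln_one_plus_le_one)
  qed simp
  have "0 < t * expectation Z - 2 * t\<^sup>2 * C\<^sup>2"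
    using gain by simp
  also have "\<dots> = expectation (\<lambda>\<omega>. t * Z \<omega> - 2 * t\<^sup>2 * C\<^sup>2)"
    using int_Z by (simp add: prob_space)
  also have "\<dots> \<le> expectation (\<lambda>\<omega>. ln (1 + t * Z \<omega>))"
  proof (intro integral_mono_AE)
    show "AE \<omega> in M. t * Z \<omega> - 2 * t\<^sup>2 * C\<^sup>2 \<le> ln (1 + t * Z \<omega>)"
      using small by eventually_elim (use ln_one_plus_ge_quadratic in fastforce)
  qed (use int_Z int_ln in auto)
  finally show ?thesis
    using t by blast
qed

lemma axis_in_gain_simplex: "axis j 1 \<in> gain_simplex"
  by (auto simp: gain_simplex_def axis_def)

lemma convex_gain_simplex: "convex gain_simplex"
  by (auto simp: convex_def gain_simplex_def sum.distrib simp flip: sum_distrib_left)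

lemma inner_gain_simplex_bounds:
  fixes v :: "real^'m"
  assumes K: "K \<in> gain_simplex" and bounds: "\<And>l. a \<le> v $ l \<and> v $ l \<le> b"
  shows "a \<le> K \<bullet> v \<and> K \<bullet> v \<le> b"
proof -
  have K_nonneg: "\<And>l. 0 \<le> K $ l" and K_sum: "(\<Sum>l\<in>UNIV. K $ l) = 1"
    using K by (auto simp: gain_simplex_def)
  have "a = (\<Sum>l\<in>UNIV. K $ l * a)" and "b = (\<Sum>l\<in>UNIV. K $ l * b)"
    by (simp_all add: K_sum flip: sum_distrib_right)
  moreover have "K \<bullet> v = (\<Sum>l\<in>UNIV. K $ l * v $ l)"
    by (simp add: inner_vec_def)
  ultimately show ?thesis
    using bounds K_nonneg by (metis (no_types, lifting) mult_left_mono sum_mono)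
qed

lemma borel_measurable_vec_lambda:
  fixes f :: "'a \<Rightarrow> 'n::finite \<Rightarrow> real"
  assumes "\<And>i. (\<lambda>x. f x i) \<in> borel_measurable M"
  shows "(\<lambda>x. \<chi> i. f x i) \<in> borel_measurable M"
  using assms by (auto simp: borel_measurable_euclidean_space[where 'c="real^'n"] Basis_vec_def
      inner_axis simp flip: cart_eq_inner_axis)

lemma borel_measurable_vec_nth [measurable (raw)]:
  fixes f :: "'a \<Rightarrow> real^'n"
  assumes "f \<in> borel_measurable M"
  shows "(\<lambda>x. f x $ i) \<in> borel_measurable M"
  using measurable_compose[OF assms borel_measurable_nth] by simp

locale bounded_gross_returns = prob_space M for M :: "'a measure" +
  fixes W :: "'a \<Rightarrow> real^'m" and a b :: real
  assumes measurable_W [measurable]: "W \<in> borel_measurable M"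
    and lower_pos: "0 < a"
    and bounded: "AE \<omega> in M. \<forall>l. a \<le> W \<omega> $ l \<and> W \<omega> $ l \<le> b"
begin

lemma inner_W_bounds:
  assumes "K \<in> gain_simplex"
  shows "AE \<omega> in M. a \<le> K \<bullet> W \<omega> \<and> K \<bullet> W \<omega> \<le> b"
  using bounded by eventually_elim (use assms inner_gain_simplex_bounds in blast)

lemma integrable_ln_inner:
  assumes "K \<in> gain_simplex"
  shows "integrable M (\<lambda>\<omega>. ln (K \<bullet> W \<omega>))"
proof (intro integrable_const_bound[where B="\<bar>ln a\<bar> + \<bar>ln b\<bar>"])
  show "AE \<omega> in M. norm (ln (K \<bullet> W \<omega>)) \<le> \<bar>ln a\<bar> + \<bar>ln b\<bar>"
    using inner_W_bounds[OF assms]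
  proof eventually_elim
    case (elim \<omega>)
    then have "ln a \<le> ln (K \<bullet> W \<omega>)" "ln (K \<bullet> W \<omega>) \<le> ln b"
      using lower_pos by auto
    then show ?case by simp
  qed
qed simp

lemma integrable_ln_nth: "integrable M (\<lambda>\<omega>. ln (W \<omega> $ j))"
  using integrable_ln_inner[OF axis_in_gain_simplex[of j]] by (simp add: inner_axis')

lemma ratio_bounds: "AE \<omega> in M. 0 < W \<omega> $ i / W \<omega> $ j \<and> W \<omega> $ i / W \<omega> $ j \<le> b / a"
  using bounded
proof eventually_elim
  case (elim \<omega>)
  then have "a \<le> W \<omega> $ i" "W \<omega> $ i \<le> b" "a \<le> W \<omega> $ j"
    by auto
  then show ?case
    using lower_pos by (auto intro!: frac_le)
qed

lemma integrable_ratio: "integrable M (\<lambda>\<omega>. W \<omega> $ i / W \<omega> $ j)"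
proof (intro integrable_const_bound[where B="b / a"])
  show "AE \<omega> in M. norm (W \<omega> $ i / W \<omega> $ j) \<le> b / a"
    using ratio_bounds[of i j] by eventually_elim (simp del: abs_divide)
qed measurable

lemma expectation_ratio_self: "expectation (\<lambda>\<omega>. W \<omega> $ j / W \<omega> $ j) = 1"
proof -
  have "AE \<omega> in M. W \<omega> $ j / W \<omega> $ j = 1"
    using ratio_bounds[of j j] by eventually_elim auto
  then have "expectation (\<lambda>\<omega>. W \<omega> $ j / W \<omega> $ j) = expectation (\<lambda>_. 1)"
    by (intro integral_cong_AE) auto
  then show ?thesis by (simp add: prob_space)
qed

lemma expectation_ln_inner_le_axis:
  assumes ratios: "\<And>i. expectation (\<lambda>\<omega>. W \<omega> $ i / W \<omega> $ j) \<le> 1"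
    and K: "K \<in> gain_simplex"
  shows "expectation (\<lambda>\<omega>. ln (K \<bullet> W \<omega>)) \<le> expectation (\<lambda>\<omega>. ln (W \<omega> $ j))"
proof -
  have K_nonneg: "\<And>l. 0 \<le> K $ l" and K_sum: "(\<Sum>l\<in>UNIV. K $ l) = 1"
    using K by (auto simp: gain_simplex_def)
  let ?R = "\<lambda>\<omega>. \<Sum>l\<in>UNIV. K $ l * (W \<omega> $ l / W \<omega> $ j)"
  have pointwise: "AE \<omega> in M. ln (K \<bullet> W \<omega>) \<le> ln (W \<omega> $ j) + ?R \<omega> - 1"
    using bounded inner_W_bounds[OF K]
  proof eventually_elim
    case (elim \<omega>)
    then have Wj: "0 < W \<omega> $ j" and KW: "0 < K \<bullet> W \<omega>"
      using lower_pos by (auto intro: less_le_trans)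
    have "K \<bullet> W \<omega> / W \<omega> $ j = ?R \<omega>"
      by (simp add: inner_vec_def sum_divide_distrib)
    moreover have "ln (K \<bullet> W \<omega> / W \<omega> $ j) \<le> K \<bullet> W \<omega> / W \<omega> $ j - 1"
      using Wj KW by (intro ln_le_minus_one) simp
    moreover have "ln (K \<bullet> W \<omega> / W \<omega> $ j) = ln (K \<bullet> W \<omega>) - ln (W \<omega> $ j)"
      using KW Wj by (rule ln_divide_pos)
    ultimately show ?case
      by linarith
  qed
  have int_R: "integrable M ?R"
    by (intro Bochner_Integration.integrable_sum integrable_mult_right integrable_ratio)
  have "expectation (\<lambda>\<omega>. ln (K \<bullet> W \<omega>)) \<le> expectation (\<lambda>\<omega>. ln (W \<omega> $ j) + ?R \<omega> - 1)"
    using pointwise int_R integrable_ln_nth integrable_ln_inner[OF K] by (intro integral_mono_AE) auto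
  also have "\<dots> = expectation (\<lambda>\<omega>. ln (W \<omega> $ j))
      + (\<Sum>l\<in>UNIV. K $ l * expectation (\<lambda>\<omega>. W \<omega> $ l / W \<omega> $ j)) - 1"
    using int_R integrable_ln_nth integrable_ratio
    by (simp add: prob_space integral_sum del: times_divide_eq_right)
  also have "\<dots> \<le> expectation (\<lambda>\<omega>. ln (W \<omega> $ j)) + (\<Sum>l\<in>UNIV. K $ l * 1) - 1"
    using K_nonneg ratios by (intro add_mono diff_mono order_refl sum_mono mult_left_mono) auto
  also have "\<dots> = expectation (\<lambda>\<omega>. ln (W \<omega> $ j))"
    using K_sum by simp
  finally show ?thesis .
qed

lemma ln_inner_shift_weight:
  assumes "0 < t" "t \<le> 1"
  shows "AE \<omega> in M. ln (((1 - t) *\<^sub>R axis j 1 + t *\<^sub>R axis i 1) \<bullet> W \<omega>)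
    = ln (W \<omega> $ j) + ln (1 + t * (W \<omega> $ i / W \<omega> $ j - 1))"
  using bounded ratio_bounds[of i j]
proof eventually_elim
  case (elim \<omega>)
  then have Wj: "0 < W \<omega> $ j"
    using lower_pos by (auto intro: less_le_trans)
  have "0 < (1 - t) + t * (W \<omega> $ i / W \<omega> $ j)"
    using elim assms by (intro add_nonneg_pos mult_pos_pos) auto
  then have pos: "0 < 1 + t * (W \<omega> $ i / W \<omega> $ j - 1)"
    by (simp add: algebra_simps)
  have "((1 - t) *\<^sub>R axis j 1 + t *\<^sub>R axis i 1) \<bullet> W \<omega> = (1 - t) * W \<omega> $ j + t * W \<omega> $ i"
    by (simp add: inner_add_left inner_axis')
  also have "\<dots> = W \<omega> $ j * (1 + t * (W \<omega> $ i / W \<omega> $ j - 1))"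
    using Wj by (simp add: field_simps)
  finally show ?case
    using Wj pos by (simp add: ln_mult)
qed

lemma expectation_ln_inner_gt_axis:
  assumes "1 < expectation (\<lambda>\<omega>. W \<omega> $ i / W \<omega> $ j)"
  shows "\<exists>K\<in>gain_simplex. expectation (\<lambda>\<omega>. ln (W \<omega> $ j)) < expectation (\<lambda>\<omega>. ln (K \<bullet> W \<omega>))"
proof -
  define Z where "Z = (\<lambda>\<omega>. W \<omega> $ i / W \<omega> $ j - 1)"
  have Z_measurable [measurable]: "Z \<in> borel_measurable M"
    unfolding Z_def by measurable
  have Z_bounded: "AE \<omega> in M. \<bar>Z \<omega>\<bar> \<le> b / a + 1"
    using ratio_bounds[of i j] unfolding Z_def by eventually_elim linarith
  have Z_pos: "0 < expectation Z"
    using assms integrable_ratio[of i j] by (simp add: Z_def prob_space)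
  obtain t where t: "0 < t" "t \<le> 1"
    and gain: "0 < expectation (\<lambda>\<omega>. ln (1 + t * Z \<omega>))"
    using expectation_ln_one_plus_small_pos[OF Z_measurable Z_bounded Z_pos] by blast
  define K :: "real^'m" where "K = (1 - t) *\<^sub>R axis j 1 + t *\<^sub>R axis i 1"
  have K: "K \<in> gain_simplex"
    unfolding K_def using t by (intro convexD[OF convex_gain_simplex] axis_in_gain_simplex) auto
  have "expectation (\<lambda>\<omega>. ln (K \<bullet> W \<omega>))
      = expectation (\<lambda>\<omega>. ln (W \<omega> $ j) + ln (1 + t * Z \<omega>))"
    using ln_inner_shift_weight[of t j i] t unfolding K_def Z_def by (intro integral_cong_AE) auto
  also have "\<dots> = expectation (\<lambda>\<omega>. ln (W \<omega> $ j)) + expectation (\<lambda>\<omega>. ln (1 + t * Z \<omega>))"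
  proof (intro Bochner_Integration.integral_add integrable_ln_nth)
    \<comment> \<open>a nonzero Bochner integral forces integrability\<close>
    show "integrable M (\<lambda>\<omega>. ln (1 + t * Z \<omega>))"
      using gain not_integrable_integral_eq by (metis less_irrefl)
  qed
  finally have "expectation (\<lambda>\<omega>. ln (W \<omega> $ j)) < expectation (\<lambda>\<omega>. ln (K \<bullet> W \<omega>))"
    using gain by linarith
  with K show ?thesis by blast
qed

theorem axis_log_optimal_iff:
  "(\<forall>K\<in>gain_simplex. expectation (\<lambda>\<omega>. ln (K \<bullet> W \<omega>)) \<le> expectation (\<lambda>\<omega>. ln (W \<omega> $ j)))
    \<longleftrightarrow> (\<forall>i. i \<noteq> j \<longrightarrow> expectation (\<lambda>\<omega>. W \<omega> $ i / W \<omega> $ j) \<le> 1)"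
proof
  assume "\<forall>K\<in>gain_simplex. expectation (\<lambda>\<omega>. ln (K \<bullet> W \<omega>)) \<le> expectation (\<lambda>\<omega>. ln (W \<omega> $ j))"
  then show "\<forall>i. i \<noteq> j \<longrightarrow> expectation (\<lambda>\<omega>. W \<omega> $ i / W \<omega> $ j) \<le> 1"
    using expectation_ln_inner_gt_axis by (meson not_le)
next
  assume "\<forall>i. i \<noteq> j \<longrightarrow> expectation (\<lambda>\<omega>. W \<omega> $ i / W \<omega> $ j) \<le> 1"
  then have "expectation (\<lambda>\<omega>. W \<omega> $ i / W \<omega> $ j) \<le> 1" for i
    using expectation_ratio_self by (cases "i = j") auto
  then show "\<forall>K\<in>gain_simplex. expectation (\<lambda>\<omega>. ln (K \<bullet> W \<omega>)) \<le> expectation (\<lambda>\<omega>. ln (W \<omega> $ j))"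
    using expectation_ln_inner_le_axis by blast
qed

end

lemma (in prob_space) expectation_prod_iid:
  fixes X :: "nat \<Rightarrow> 'a \<Rightarrow> 'b::topological_space" and h :: "'b \<Rightarrow> real"
  assumes indep: "indep_vars (\<lambda>_. borel) X UNIV"
    and ident: "\<And>k. distr M borel (X k) = distr M borel (X 0)"
    and [measurable]: "h \<in> borel_measurable borel"
    and integrable: "integrable M (\<lambda>\<omega>. h (X 0 \<omega>))"
  shows "expectation (\<lambda>\<omega>. \<Prod>k<n. h (X k \<omega>)) = expectation (\<lambda>\<omega>. h (X 0 \<omega>)) ^ n"
proof -
  have [measurable]: "X k \<in> borel_measurable M" for k
    using indep unfolding indep_vars_def2 by blast
  have integrable_k: "integrable M (\<lambda>\<omega>. h (X k \<omega>))" for k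
  proof -
    have "integrable (distr M borel (X 0)) h"
      using integrable by (subst integrable_distr_eq) auto
    then have "integrable (distr M borel (X k)) h"
      by (simp only: ident[of k])
    then show ?thesis
      by (subst (asm) integrable_distr_eq) auto
  qed
  have same_expectation: "expectation (\<lambda>\<omega>. h (X k \<omega>)) = expectation (\<lambda>\<omega>. h (X 0 \<omega>))" for k
  proof -
    have "expectation (\<lambda>\<omega>. h (X k \<omega>)) = integral\<^sup>L (distr M borel (X k)) h"
      by (rule integral_distr[symmetric]) auto
    also have "\<dots> = integral\<^sup>L (distr M borel (X 0)) h"
      by (simp only: ident[of k])
    also have "\<dots> = expectation (\<lambda>\<omega>. h (X 0 \<omega>))"
      by (rule integral_distr) auto
    finally show ?thesis .
  qed
  have "indep_vars (\<lambda>_. borel) (\<lambda>k \<omega>. h (X k \<omega>)) {..<n}"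
    by (rule indep_vars_subset[OF indep_vars_compose2[OF indep]]) simp_all
  then have "expectation (\<lambda>\<omega>. \<Prod>k<n. h (X k \<omega>)) = (\<Prod>k<n. expectation (\<lambda>\<omega>. h (X k \<omega>)))"
    using integrable_k by (intro indep_vars_lebesgue_integral) auto
  also have "\<dots> = (\<Prod>k<n. expectation (\<lambda>\<omega>. h (X 0 \<omega>)))"
    by (rule prod.cong[OF refl same_expectation])
  finally show ?thesis
    by simp
qed

definition gross_return :: "(nat \<Rightarrow> 'a \<Rightarrow> real^'m) \<Rightarrow> nat \<Rightarrow> 'a \<Rightarrow> real^'m" where
  "gross_return X n \<omega> = (\<chi> i. \<Prod>k<n. 1 + X k \<omega> $ i)"

lemma one_plus_inner_compound_return:
  assumes "K \<in> gain_simplex"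
  shows "1 + K \<bullet> compound_return X n \<omega> = K \<bullet> gross_return X n \<omega>"
  using assms
  by (simp add: compound_return_def gross_return_def gain_simplex_def inner_vec_def
      right_diff_distrib sum_subtractf)

lemma growth_rate_gross_return:
  assumes "K \<in> gain_simplex"
  shows "growth_rate M X n K = (\<integral>\<omega>. ln (K \<bullet> gross_return X n \<omega>) \<partial>M) / n"
  using assms by (simp add: growth_rate_def one_plus_inner_compound_return)

lemma borel_measurable_gross_return:
  assumes [measurable]: "\<And>k. X k \<in> borel_measurable M"
  shows "gross_return X n \<in> borel_measurable M"
  unfolding gross_return_def[abs_def] by (intro borel_measurable_vec_lambda) measurable

lemma returns_uniformly_bounded:
  fixes X :: "nat \<Rightarrow> 'a \<Rightarrow> real^'m"
  assumes "\<And>k. AE \<omega> in M. \<forall>i. Xmin i \<le> X k \<omega> $ i \<and> X k \<omega> $ i \<le> Xmax i"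
    and "\<And>i. Xmin i > -1"
  obtains lo hi where "0 < lo" and "AE \<omega> in M. \<forall>k i. lo \<le> 1 + X k \<omega> $ i \<and> 1 + X k \<omega> $ i \<le> hi"
proof
  define lo where "lo = Min (range (\<lambda>i. 1 + Xmin i))"
  define hi where "hi = Max (range (\<lambda>i. 1 + Xmax i))"
  show "0 < lo"
  proof -
    have "0 < 1 + Xmin i" for i
      using assms(2)[of i] by linarith
    then show ?thesis by (simp add: lo_def)
  qed
  have "AE \<omega> in M. \<forall>k i. Xmin i \<le> X k \<omega> $ i \<and> X k \<omega> $ i \<le> Xmax i"
    using assms(1) by (simp add: AE_all_countable)
  then show "AE \<omega> in M. \<forall>k i. lo \<le> 1 + X k \<omega> $ i \<and> 1 + X k \<omega> $ i \<le> hi"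
  proof eventually_elim
    case (elim \<omega>)
    have "lo \<le> 1 + Xmin i" "1 + Xmax i \<le> hi" for i
      by (auto simp: lo_def hi_def)
    then show ?case
      using elim by (meson add_left_mono order_trans)
  qed
qed

lemma bounded_gross_returns_gross_return:
  assumes "prob_space M" and "\<And>k. X k \<in> borel_measurable M" and lo: "0 < lo"
    and returns: "AE \<omega> in M. \<forall>k i. lo \<le> 1 + X k \<omega> $ i \<and> 1 + X k \<omega> $ i \<le> hi"
  shows "bounded_gross_returns M (gross_return X n) (lo ^ n) (hi ^ n)"
proof (intro bounded_gross_returns.intro bounded_gross_returns_axioms.intro)
  show "prob_space M" by fact
  show "gross_return X n \<in> borel_measurable M"
    by (rule borel_measurable_gross_return) fact
  show "0 < lo ^ n"
    using lo by simp
  show "AE \<omega> in M. \<forall>i. lo ^ n \<le> gross_return X n \<omega> $ i \<and> gross_return X n \<omega> $ i \<le> hi ^ n"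
    using returns
  proof eventually_elim
    case (elim \<omega>)
    have "(\<Prod>k<n. lo) \<le> (\<Prod>k<n. 1 + X k \<omega> $ i)" for i
      using lo elim by (intro prod_mono) auto
    moreover have "(\<Prod>k<n. 1 + X k \<omega> $ i) \<le> (\<Prod>k<n. hi)" for i
      using less_imp_le[OF lo] elim by (intro prod_mono) (auto intro: order_trans)
    ultimately show ?case
      by (simp add: gross_return_def)
  qed
qed

lemma return_ratio_bounds:
  fixes X :: "nat \<Rightarrow> 'a \<Rightarrow> real^'m"
  assumes lo: "0 < lo"
    and returns: "AE \<omega> in M. \<forall>k i. lo \<le> 1 + X k \<omega> $ i \<and> 1 + X k \<omega> $ i \<le> hi"
  shows "AE \<omega> in M. 0 \<le> (1 + X k \<omega> $ i) / (1 + X k \<omega> $ j)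
    \<and> (1 + X k \<omega> $ i) / (1 + X k \<omega> $ j) \<le> hi / lo"
  using returns
proof eventually_elim
  case (elim \<omega>)
  then have "lo \<le> 1 + X k \<omega> $ i" "1 + X k \<omega> $ i \<le> hi" "lo \<le> 1 + X k \<omega> $ j"
    by auto
  then show ?case
    using lo by (auto intro!: frac_le)
qed

lemma (in prob_space) expectation_gross_return_ratio:
  fixes X :: "nat \<Rightarrow> 'a \<Rightarrow> real^'m"
  assumes [measurable]: "\<And>k. X k \<in> borel_measurable M"
    and indep: "indep_vars (\<lambda>_. borel) X UNIV"
    and ident: "\<And>k. distr M borel (X k) = distr M borel (X 0)"
    and lo: "0 < lo"
    and returns: "AE \<omega> in M. \<forall>k i. lo \<le> 1 + X k \<omega> $ i \<and> 1 + X k \<omega> $ i \<le> hi"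
  shows "expectation (\<lambda>\<omega>. gross_return X n \<omega> $ i / gross_return X n \<omega> $ j)
    = expectation (\<lambda>\<omega>. (1 + X 0 \<omega> $ i) / (1 + X 0 \<omega> $ j)) ^ n"
proof -
  let ?h = "\<lambda>v::real^'m. (1 + v $ i) / (1 + v $ j)"
  have "integrable M (\<lambda>\<omega>. ?h (X 0 \<omega>))"
  proof (intro integrable_const_bound[where B="hi / lo"])
    show "AE \<omega> in M. norm (?h (X 0 \<omega>)) \<le> hi / lo"
      using return_ratio_bounds[OF lo returns, of 0 i j] by eventually_elim (simp del: abs_divide)
  qed measurable
  then have "expectation (\<lambda>\<omega>. \<Prod>k<n. ?h (X k \<omega>)) = expectation (\<lambda>\<omega>. ?h (X 0 \<omega>)) ^ n"
    by (intro expectation_prod_iid[OF indep ident]) measurable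
  then show ?thesis
    by (simp add: gross_return_def prod_dividef)
qed

theorem theorem2:
  fixes M :: "'a measure" and X :: "nat \<Rightarrow> 'a \<Rightarrow> real^'m"
    and Xmin Xmax :: "'m \<Rightarrow> real" and n :: nat and j :: 'm
  assumes "prob_space M"
    and "CARD('m) \<ge> 2"
    and meas: "\<And>k. X k \<in> borel_measurable M"
    and indep: "prob_space.indep_vars M (\<lambda>_. borel) X UNIV"
    and ident: "\<And>k. distr M borel (X k) = distr M borel (X 0)"
    and bounds: "\<And>k. AE \<omega> in M. \<forall>i. Xmin i \<le> X k \<omega> $ i \<and> X k \<omega> $ i \<le> Xmax i"
    and Xmin_gt: "\<And>i. Xmin i > -1"
    and riskless: "\<exists>i0 r. r \<ge> 0 \<and> (\<forall>k. AE \<omega> in M. X k \<omega> $ i0 = r)"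
    and "n \<ge> 1"
  shows "(axis j 1 \<in> gain_simplex \<and>
          (\<forall>K\<in>gain_simplex. growth_rate M X n K \<le> growth_rate M X n (axis j 1)))
     \<longleftrightarrow> (\<forall>i. i \<noteq> j \<longrightarrow>
          (\<integral>\<omega>. (1 + X 0 \<omega> $ i) / (1 + X 0 \<omega> $ j) \<partial>M) \<le> 1)"
proof -
  interpret prob_space M by fact
  obtain lo hi where lo: "0 < lo"
    and returns: "AE \<omega> in M. \<forall>k i. lo \<le> 1 + X k \<omega> $ i \<and> 1 + X k \<omega> $ i \<le> hi"
    by (rule returns_uniformly_bounded[OF bounds Xmin_gt])
  interpret bounded_gross_returns M "gross_return X n" "lo ^ n" "hi ^ n"
    by (rule bounded_gross_returns_gross_return[OF \<open>prob_space M\<close> meas lo returns])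
  define c where "c i = (\<integral>\<omega>. (1 + X 0 \<omega> $ i) / (1 + X 0 \<omega> $ j) \<partial>M)" for i
  have ratio: "expectation (\<lambda>\<omega>. gross_return X n \<omega> $ i / gross_return X n \<omega> $ j) = c i ^ n" for i
    unfolding c_def by (rule expectation_gross_return_ratio[OF meas indep ident lo returns])
  have c_nonneg: "0 \<le> c i" for i
    unfolding c_def
    using return_ratio_bounds[OF lo returns, of 0 i j] by (intro integral_nonneg_AE) auto
  have "(\<forall>K\<in>gain_simplex. growth_rate M X n K \<le> growth_rate M X n (axis j 1))
    \<longleftrightarrow> (\<forall>K\<in>gain_simplex. expectation (\<lambda>\<omega>. ln (K \<bullet> gross_return X n \<omega>))
                           \<le> expectation (\<lambda>\<omega>. ln (gross_return X n \<omega> $ j)))"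
    using \<open>n \<ge> 1\<close>
    by (auto simp: growth_rate_gross_return axis_in_gain_simplex inner_axis' divide_le_cancel)
  then show ?thesis
    using axis_log_optimal_iff[of j] ratio c_nonneg \<open>n \<ge> 1\<close>
    by (simp add: axis_in_gain_simplex power_le_one_iff c_def)
qed

end
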